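(* Let $\mathcal{H}$ be a separable complex Hilbert space, $H$ a self-adjoint operator on $\mathcal{H}$, $\hbar>0$ a constant, and $\psi\in\mathcal{H}$ a unit vector in the domain of $H$. For $t\in\mathbb{R}$ let $p(t)=\left|\langle \psi | e^{-\mathrm{i} tH/\hbar}\psi\rangle\right|^2$, and for $\alpha\ge 0$, $\tau\in\mathbb{R}$ and positive integers $N$ let $p_{N,\alpha}(\tau)=p(\tau N^{\alpha-1})^N$. Then: (i) if $0\le \alpha<1/2$, then $\lim_{N\to+\infty}p_{N,\alpha}(\tau)=1$, uniformly in $\tau$ on compact subsets of $\mathbb{R}$; (ii) if $\alpha=1/2$, then $\lim_{N\to+\infty}p_{N,1/2}(\tau)=\exp(-\tau^2/\tau_Z^2)$, uniformly in $\tau$ on compact subsets of $\mathbb{R}$, where $\tau_Z^{-2}=\frac{1}{\hbar^2}\left(\langle H\psi|H\psi\rangle-\langle\psi|H\psi\rangle^2\right)$; (iii) if $1/2<\alpha<1$ and $\psi$ is not an eigenvector of $H$, then $\lim_{N\to+\infty}p_{N,\alpha}(\tau)=0$, uniformly in $\tau$ on compact subsets of $\mathbb{R}\setminus\{0\}$.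
   Context: $\langle\cdot|\cdot\rangle$ denotes the inner product of $\mathcal{H}$ (linear in the second argument), and $e^{-\mathrm{i}tH/\hbar}$ is the unitary group generated by $H$ via the spectral theorem. The quantity $\langle H\psi|H\psi\rangle-\langle\psi|H\psi\rangle^2$ is the variance of $H$ in $\psi$; it vanishes exactly when $\psi$ is an eigenvector, in which case $\tau_Z^{-2}=0$ and the formula in (ii) reads $1$. *)

theory Defs
  imports "HOL-Analysis.Analysis"
begin

text \<open>The library has no complex inner product spaces, so we introduce a class:
a real Banach space equipped with a complex scalar multiplication extending the
real one, and a complex inner product (linear in the second argument,
conjugate-symmetric, positive definite) inducing the norm.\<close>

class chilbert_space = banach +
  fixes scaleC :: "complex \<Rightarrow> 'a \<Rightarrow> 'a"
    and cinner :: "'a \<Rightarrow> 'a \<Rightarrow> complex"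
  assumes scaleC_add_right: "scaleC a (x + y) = scaleC a x + scaleC a y"
    and scaleC_add_left: "scaleC (a + b) x = scaleC a x + scaleC b x"
    and scaleC_scaleC: "scaleC a (scaleC b x) = scaleC (a * b) x"
    and scaleC_one: "scaleC 1 x = x"
    and scaleR_scaleC: "scaleR r x = scaleC (complex_of_real r) x"
    and cinner_conj: "cinner x y = cnj (cinner y x)"
    and cinner_add_right: "cinner x (y + z) = cinner x y + cinner x z"
    and cinner_scaleC_right: "cinner x (scaleC a y) = a * cinner x y"
    and cinner_nonneg: "0 \<le> Re (cinner x x)"
    and cinner_eq_zero: "cinner x x = 0 \<Longrightarrow> x = 0"
    and norm_cinner: "norm x = sqrt (Re (cinner x x))"

definition separable_space :: "'a::topological_space itself \<Rightarrow> bool" where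
  "separable_space _ \<longleftrightarrow> (\<exists>S::'a set. countable S \<and> closure S = UNIV)"

text \<open>An operator is a pair of a domain D and a map H (values outside D are irrelevant).\<close>

definition clinear_on :: "'a::chilbert_space set \<Rightarrow> ('a \<Rightarrow> 'b::chilbert_space) \<Rightarrow> bool" where
  "clinear_on D H \<longleftrightarrow>
     (0 \<in> D \<and> (\<forall>x\<in>D. \<forall>y\<in>D. x + y \<in> D) \<and> (\<forall>a. \<forall>x\<in>D. scaleC a x \<in> D) \<and>
      (\<forall>x\<in>D. \<forall>y\<in>D. H (x + y) = H x + H y) \<and>
      (\<forall>a. \<forall>x\<in>D. H (scaleC a x) = scaleC a (H x)))"

text \<open>H is densely defined, linear, and equals its adjoint H*: the domain of H* is
  {y | exists z. for all x in D, <Hx|y> = <x|z>} and H* y is that z.\<close>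

definition self_adjoint :: "'a::chilbert_space set \<Rightarrow> ('a \<Rightarrow> 'a) \<Rightarrow> bool" where
  "self_adjoint D H \<longleftrightarrow>
     clinear_on D H \<and> closure D = UNIV \<and>
     D = {y. \<exists>z. \<forall>x\<in>D. cinner (H x) y = cinner x z} \<and>
     (\<forall>x\<in>D. \<forall>y\<in>D. cinner (H x) y = cinner x (H y))"

definition unitary :: "('a::chilbert_space \<Rightarrow> 'a) \<Rightarrow> bool" where
  "unitary U \<longleftrightarrow> clinear_on UNIV U \<and> surj U \<and> (\<forall>x y. cinner (U x) (U y) = cinner x y)"

text \<open>U t = exp(-i t H / hbar): the strongly continuous one-parameter unitary group
  whose generator is -i H / hbar (with exactly D as generator domain).  By Stone's
  theorem this group exists and is unique; it coincides with the one given by the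
  spectral theorem.\<close>

definition is_evolution :: "real \<Rightarrow> 'a::chilbert_space set \<Rightarrow> ('a \<Rightarrow> 'a) \<Rightarrow> (real \<Rightarrow> 'a \<Rightarrow> 'a) \<Rightarrow> bool" where
  "is_evolution hbar D H U \<longleftrightarrow>
     (\<forall>t. unitary (U t)) \<and> U 0 = id \<and> (\<forall>s t. U (s + t) = U s \<circ> U t) \<and>
     (\<forall>x. continuous_on UNIV (\<lambda>t. U t x)) \<and>
     D = {x. \<exists>v. ((\<lambda>t. U t x) has_vector_derivative v) (at 0)} \<and>
     (\<forall>x\<in>D. ((\<lambda>t. U t x) has_vector_derivative
                 scaleC (- \<i> / complex_of_real hbar) (H x)) (at 0))"

definition surv_prob :: "(real \<Rightarrow> 'a::chilbert_space \<Rightarrow> 'a) \<Rightarrow> 'a \<Rightarrow> real \<Rightarrow> real" where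
  "surv_prob U \<psi> t = (cmod (cinner \<psi> (U t \<psi>)))^2"

definition pN :: "(real \<Rightarrow> 'a::chilbert_space \<Rightarrow> 'a) \<Rightarrow> 'a \<Rightarrow> real \<Rightarrow> nat \<Rightarrow> real \<Rightarrow> real" where
  "pN U \<psi> \<alpha> N \<tau> = surv_prob U \<psi> (\<tau> * real N powr (\<alpha> - 1)) ^ N"

end

theory Submission
  imports Defs "HOL-Real_Asymp.Real_Asymp"
begin

text \<open>Write the survival probability as p(t) = 1 - t^2 q(t). Differentiating the unit-norm curve
  t \<mapsto> U t \<psi> at 0 shows that q extends continuously to 0 with q(0) = \<tau>_Z^-2, the variance of H
  in \<psi> divided by hbar^2. With t = \<tau> N^(\<alpha>-1) one has N t^2 q(t) = \<tau>^2 N^(2\<alpha>-1) q(t) and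
  p(t)^N \<approx> exp(-N t^2 q(t)), since N t^4 \<rightarrow> 0 for \<alpha> < 1. The exponent tends to 0 for \<alpha> < 1/2,
  to -\<tau>^2 q(0) for \<alpha> = 1/2, and to -\<infinity> for \<alpha> > 1/2 as soon as q(0) > 0, which is exactly the
  case when \<psi> is not an eigenvector. Uniformity on compact sets is reduced to convergence
  along arbitrary sequences of parameters in the set.\<close>

lemma cinner_add_left: "cinner (x + y) z = cinner x z + cinner y z"
  for x y z :: "'a::chilbert_space"
  by (metis cinner_conj cinner_add_right complex_cnj_add)

lemma cinner_scaleC_left: "cinner (scaleC a x) y = cnj a * cinner x y"
  for x y :: "'a::chilbert_space"
  by (metis cinner_conj cinner_scaleC_right complex_cnj_mult complex_cnj_cnj)

lemma scaleC_minus_one: "scaleC (-1) x = - x" for x :: "'a::chilbert_space"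
  using scaleR_scaleC[of "-1" x] by simp

lemma cinner_diff_right: "cinner x (y - z) = cinner x y - cinner x z"
  for x y z :: "'a::chilbert_space"
  using cinner_add_right[of x y "scaleC (-1) z"] cinner_scaleC_right[of x "-1" z]
  by (simp add: scaleC_minus_one)

lemma cinner_diff_left: "cinner (x - y) z = cinner x z - cinner y z"
  for x y z :: "'a::chilbert_space"
  using cinner_add_left[of x "scaleC (-1) y" z] cinner_scaleC_left[of "-1" y z]
  by (simp add: scaleC_minus_one)

lemma Re_cinner_commute: "Re (cinner y x) = Re (cinner x y)" for x y :: "'a::chilbert_space"
  by (subst cinner_conj) simp

lemma power2_norm_eq_Re_cinner: "norm x ^ 2 = Re (cinner x x)" for x :: "'a::chilbert_space"
  using norm_cinner[of x] cinner_nonneg[of x] by simp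

lemma cinner_self_eq_power2_norm: "cinner x x = complex_of_real (norm x ^ 2)"
  for x :: "'a::chilbert_space"
proof (rule complex_eqI)
  have "Im (cinner x x) = Im (cnj (cinner x x))" using cinner_conj[of x x] by simp
  then show "Im (cinner x x) = Im (complex_of_real (norm x ^ 2))" by simp
qed (simp add: power2_norm_eq_Re_cinner)

lemma power2_norm_diff: "norm (x - y)^2 = norm x^2 + norm y^2 - 2 * Re (cinner x y)"
  for x y :: "'a::chilbert_space"
  using Re_cinner_commute[of x y]
  by (simp add: power2_norm_eq_Re_cinner cinner_diff_left cinner_diff_right)

lemma power2_norm_add: "norm (x + y)^2 = norm x^2 + norm y^2 + 2 * Re (cinner x y)"
  for x y :: "'a::chilbert_space"
  using Re_cinner_commute[of x y]
  by (simp add: power2_norm_eq_Re_cinner cinner_add_left cinner_add_right)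

lemma norm_scaleC: "norm (scaleC a x) = cmod a * norm x" for x :: "'a::chilbert_space"
proof -
  have "cinner (scaleC a x) (scaleC a x) = cnj a * a * cinner x x"
    by (simp add: cinner_scaleC_left cinner_scaleC_right)
  then have "norm (scaleC a x)^2 = Re (cnj a * a * cinner x x)"
    by (simp only: power2_norm_eq_Re_cinner)
  also have "cnj a * a = complex_of_real (cmod a ^ 2)"
    by (metis complex_norm_square mult.commute)
  finally have "norm (scaleC a x)^2 = (cmod a * norm x)^2"
    by (simp add: power2_norm_eq_Re_cinner power_mult_distrib)
  then show ?thesis by (simp add: power2_eq_iff_nonneg)
qed

lemma scaleC_diff_right: "scaleC c (x - y) = scaleC c x - scaleC c y"
  for x y :: "'a::chilbert_space"
proof -
  have "scaleC c (scaleC (-1) y) = scaleC (-1) (scaleC c y)"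
    by (simp add: scaleC_scaleC mult.commute)
  then show ?thesis
    unfolding diff_conv_add_uminus scaleC_add_right scaleC_minus_one[symmetric] by simp
qed

lemma tendsto_scaleC:
  fixes g :: "'b \<Rightarrow> 'a::chilbert_space"
  assumes "(g \<longlongrightarrow> l) F"
  shows "((\<lambda>t. scaleC c (g t)) \<longlongrightarrow> scaleC c l) F"
proof -
  have "((\<lambda>t. dist (g t) l) \<longlongrightarrow> 0) F"
    using assms tendsto_dist_iff by blast
  then have "((\<lambda>t. cmod c * dist (g t) l) \<longlongrightarrow> 0) F"
    by (rule tendsto_mult_right_zero)
  then show ?thesis
    by (subst tendsto_dist_iff) (simp add: dist_norm norm_scaleC flip: scaleC_diff_right)
qed

text \<open>Continuity of the inner product follows from polarization, without Cauchy-Schwarz.\<close>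

lemma tendsto_Re_cinner:
  fixes g :: "'b \<Rightarrow> 'a::chilbert_space"
  assumes "(g \<longlongrightarrow> l) F"
  shows "((\<lambda>t. Re (cinner a (g t))) \<longlongrightarrow> Re (cinner a l)) F"
proof -
  have polar: "Re (cinner a y) = (norm (a + y)^2 - norm a^2 - norm y^2) / 2" for y
    by (simp add: power2_norm_add)
  show ?thesis
    unfolding polar by (intro tendsto_intros assms) simp
qed

lemma tendsto_Im_cinner:
  fixes g :: "'b \<Rightarrow> 'a::chilbert_space"
  assumes "(g \<longlongrightarrow> l) F"
  shows "((\<lambda>t. Im (cinner a (g t))) \<longlongrightarrow> Im (cinner a l)) F"
proof -
  have "Im (cinner a y) = Re (cinner a (scaleC (-\<i>) y))" for y
    by (simp add: cinner_scaleC_right)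
  then show ?thesis
    by (simp only:) (intro tendsto_Re_cinner tendsto_scaleC assms)
qed

lemma power2_norm_diff_expectation:
  fixes \<psi> w :: "'a::chilbert_space"
  assumes "norm \<psi> = 1"
  defines "r \<equiv> Re (cinner \<psi> w)"
  shows "norm (w - scaleC (complex_of_real r) \<psi>)^2 = Re (cinner w w) - r^2"
proof -
  have "norm (w - scaleC (complex_of_real r) \<psi>)^2 = norm w^2 + r^2 - 2 * r * Re (cinner w \<psi>)"
    using assms(1) by (simp add: power2_norm_diff norm_scaleC cinner_scaleC_right power_mult_distrib)
  also have "Re (cinner w \<psi>) = r"
    unfolding r_def by (rule Re_cinner_commute)
  finally show ?thesis
    using power2_norm_eq_Re_cinner[of w] by (simp add: power2_eq_square)
qed

lemma variance_pos:
  fixes \<psi> w :: "'a::chilbert_space"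
  assumes "norm \<psi> = 1" and "\<not> (\<exists>c. w = scaleC c \<psi>)"
  shows "Re (cinner w w) - (Re (cinner \<psi> w))^2 > 0"
proof -
  have "w - scaleC (complex_of_real (Re (cinner \<psi> w))) \<psi> \<noteq> 0"
    using assms(2) by auto
  then have "norm (w - scaleC (complex_of_real (Re (cinner \<psi> w))) \<psi>)^2 > 0"
    by simp
  then show ?thesis
    by (simp only: power2_norm_diff_expectation[OF assms(1)])
qed

subsection \<open>Second-order behaviour of the overlap along a curve on the unit sphere\<close>

lemma tendsto_difference_quotient_at_0:
  fixes \<phi> :: "real \<Rightarrow> 'a::real_normed_vector"
  assumes "(\<phi> has_vector_derivative v) (at 0)"
  shows "((\<lambda>t. (1/t) *\<^sub>R (\<phi> t - \<phi> 0)) \<longlongrightarrow> v) (at 0)"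
proof -
  have "((\<lambda>h. norm (\<phi> (0 + h) - \<phi> 0 - h *\<^sub>R v) / norm h) \<longlongrightarrow> 0) (at 0)"
    using assms unfolding has_vector_derivative_def has_derivative_at by blast
  moreover have "\<forall>\<^sub>F h in at 0. norm (\<phi> (0 + h) - \<phi> 0 - h *\<^sub>R v) / norm h
                                  = norm ((1/h) *\<^sub>R (\<phi> h - \<phi> 0) - v)"
  proof (rule eventually_mono[OF eventually_neq_at_within[of 0]])
    fix h :: real assume "h \<noteq> 0"
    then have "(1/h) *\<^sub>R (\<phi> h - \<phi> 0) - v = (1/h) *\<^sub>R (\<phi> h - \<phi> 0 - h *\<^sub>R v)"
      by (simp add: scaleR_diff_right)
    then show "norm (\<phi> (0 + h) - \<phi> 0 - h *\<^sub>R v) / norm h = norm ((1/h) *\<^sub>R (\<phi> h - \<phi> 0) - v)"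
      by (simp add: divide_inverse mult.commute)
  qed
  ultimately have "((\<lambda>h. norm ((1/h) *\<^sub>R (\<phi> h - \<phi> 0) - v)) \<longlongrightarrow> 0) (at 0)"
    using tendsto_cong by fastforce
  then show ?thesis
    by (simp add: tendsto_norm_zero_iff Lim_null[symmetric])
qed

text \<open>With \<phi> t = \<psi> + t d(t) and 2 Re \<langle>\<psi>|d(t)\<rangle> = -t |d(t)|^2 (both vectors are unit vectors), one
  gets (1 - |\<langle>\<psi>|\<phi> t\<rangle>|^2) / t^2 = |d(t)|^2 - t^2 |d(t)|^4 / 4 - (Im \<langle>\<psi>|d(t)\<rangle>)^2 exactly.\<close>

lemma tendsto_overlap_defect_div_power2:
  fixes \<phi> :: "real \<Rightarrow> 'a::chilbert_space"
  assumes unit: "\<And>t. norm (\<phi> t) = 1" and start: "\<phi> 0 = \<psi>"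
    and deriv: "(\<phi> has_vector_derivative v) (at 0)"
  shows "((\<lambda>t. (1 - (cmod (cinner \<psi> (\<phi> t)))^2) / t^2) \<longlongrightarrow> norm v ^ 2 - (Im (cinner \<psi> v))^2)
           (at 0)"
proof -
  define d where "d t = (1/t) *\<^sub>R (\<phi> t - \<psi>)" for t
  have d: "(d \<longlongrightarrow> v) (at 0)"
    using tendsto_difference_quotient_at_0[OF deriv] by (simp add: d_def[abs_def] start)
  moreover from d have "((\<lambda>t. Im (cinner \<psi> (d t))) \<longlongrightarrow> Im (cinner \<psi> v)) (at 0)"
    by (rule tendsto_Im_cinner)
  ultimately have "((\<lambda>t. norm (d t)^2 - t^2 * (norm (d t)^2 / 2)^2 - (Im (cinner \<psi> (d t)))^2)
               \<longlongrightarrow> norm v^2 - 0^2 * (norm v^2 / 2)^2 - (Im (cinner \<psi> v))^2) (at 0)"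
    by (intro tendsto_diff tendsto_mult tendsto_power tendsto_norm tendsto_divide tendsto_const
        tendsto_ident_at) auto
  moreover have "\<forall>\<^sub>F t in at 0. norm (d t)^2 - t^2 * (norm (d t)^2 / 2)^2 - (Im (cinner \<psi> (d t)))^2
                                  = (1 - (cmod (cinner \<psi> (\<phi> t)))^2) / t^2"
  proof (rule eventually_mono[OF eventually_neq_at_within[of 0]])
    fix t :: real assume t: "t \<noteq> 0"
    have \<psi>\<psi>: "cinner \<psi> \<psi> = 1"
      using unit[of 0] start by (simp add: cinner_self_eq_power2_norm)
    have "norm (\<phi> t - \<psi>)^2 = 2 - 2 * Re (cinner \<psi> (\<phi> t))"
      using power2_norm_diff[of "\<phi> t" \<psi>] unit[of t] unit[of 0] start Re_cinner_commute[of "\<phi> t" \<psi>]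
      by simp
    moreover have "t^2 * norm (d t)^2 = norm (\<phi> t - \<psi>)^2"
      using t by (simp add: d_def power_mult_distrib power_divide)
    ultimately have Re: "Re (cinner \<psi> (\<phi> t)) = 1 - t^2 * (norm (d t)^2 / 2)"
      by linarith
    have "cinner \<psi> (d t) = complex_of_real (1/t) * (cinner \<psi> (\<phi> t) - 1)"
      by (simp add: d_def scaleR_scaleC cinner_scaleC_right cinner_diff_right \<psi>\<psi>)
    then have Im: "Im (cinner \<psi> (\<phi> t)) = t * Im (cinner \<psi> (d t))"
      using t by simp
    have "(cmod (cinner \<psi> (\<phi> t)))^2 = (1 - t^2 * (norm (d t)^2 / 2))^2 + (t * Im (cinner \<psi> (d t)))^2"
      by (simp add: cmod_power2 Re Im)
    then show "norm (d t)^2 - t^2 * (norm (d t)^2 / 2)^2 - (Im (cinner \<psi> (d t)))^2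
            = (1 - (cmod (cinner \<psi> (\<phi> t)))^2) / t^2"
      using t by (simp add: field_simps power2_eq_square)
  qed
  ultimately show ?thesis
    using tendsto_cong by fastforce
qed

lemma surv_prob_nonneg: "0 \<le> surv_prob U \<psi> t"
  by (simp add: surv_prob_def)

lemma surv_prob_at_0:
  assumes "is_evolution hbar D H U" and "norm \<psi> = 1"
  shows "surv_prob U \<psi> 0 = 1"
  using assms by (simp add: is_evolution_def surv_prob_def cinner_self_eq_power2_norm)

lemma tendsto_surv_prob_defect:
  assumes evo: "is_evolution hbar D H U" and "\<psi> \<in> D" and unit: "norm \<psi> = 1"
  shows "((\<lambda>t. (1 - surv_prob U \<psi> t) / t^2)
           \<longlongrightarrow> (Re (cinner (H \<psi>) (H \<psi>)) - (Re (cinner \<psi> (H \<psi>)))^2) / hbar^2) (at 0)"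
proof -
  define v where "v = scaleC (- \<i> / complex_of_real hbar) (H \<psi>)"
  have deriv: "((\<lambda>t. U t \<psi>) has_vector_derivative v) (at 0)"
    using evo \<open>\<psi> \<in> D\<close> unfolding is_evolution_def v_def by blast
  have "norm (U t \<psi>) = 1" for t
    using evo unit unfolding is_evolution_def unitary_def by (simp add: norm_cinner)
  moreover have "U 0 \<psi> = \<psi>"
    using evo by (simp add: is_evolution_def)
  moreover have "norm v ^ 2 - (Im (cinner \<psi> v))^2
                   = (Re (cinner (H \<psi>) (H \<psi>)) - (Re (cinner \<psi> (H \<psi>)))^2) / hbar^2"
    by (simp add: v_def norm_scaleC norm_divide power_divide cinner_scaleC_right
        power2_norm_eq_Re_cinner diff_divide_distrib)
  ultimately show ?thesis
    using tendsto_overlap_defect_div_power2[OF _ _ deriv] by (simp add: surv_prob_def)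
qed

lemma obtain_quadratic_defect:
  fixes p :: "real \<Rightarrow> real"
  assumes "p 0 = 1" and "((\<lambda>t. (1 - p t) / t^2) \<longlongrightarrow> s) (at 0)"
  obtains q where "\<And>t. p t = 1 - t^2 * q t" and "isCont q 0" and "q 0 = s"
proof -
  define q where "q t = (if t = 0 then s else (1 - p t) / t^2)" for t
  have "\<forall>\<^sub>F t in at 0. (1 - p t) / t^2 = q t"
    by (rule eventually_mono[OF eventually_neq_at_within[of 0]]) (simp add: q_def)
  then have "isCont q 0"
    using assms(2) tendsto_cong unfolding isCont_def by (fastforce simp: q_def)
  moreover have "p t = 1 - t^2 * q t" for t
    using assms(1) by (simp add: q_def)
  ultimately show thesis
    using that[of q] by (simp add: q_def)
qed

subsection \<open>Asymptotics of the powers\<close>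

lemma tendsto_bounded_mult_zero:
  fixes a b :: "'x \<Rightarrow> real"
  assumes "\<forall>\<^sub>F n in F. \<bar>a n\<bar> \<le> B" and "(b \<longlongrightarrow> 0) F"
  shows "((\<lambda>n. a n * b n) \<longlongrightarrow> 0) F"
proof (rule Lim_null_comparison)
  show "\<forall>\<^sub>F n in F. norm (a n * b n) \<le> \<bar>B\<bar> * \<bar>b n\<bar>"
    using assms(1) by eventually_elim (auto simp: abs_mult intro!: mult_right_mono)
  show "((\<lambda>n. \<bar>B\<bar> * \<bar>b n\<bar>) \<longlongrightarrow> 0) F"
    using tendsto_mult_right_zero[OF tendsto_rabs_zero[OF assms(2)]] by simp
qed

lemma tendsto_exp_diff_zero:
  fixes a b :: "'x \<Rightarrow> real"
  assumes "((\<lambda>n. a n - b n) \<longlongrightarrow> 0) F" and "\<forall>\<^sub>F n in F. \<bar>b n\<bar> \<le> B"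
  shows "((\<lambda>n. exp (a n) - exp (b n)) \<longlongrightarrow> 0) F"
proof -
  have "\<forall>\<^sub>F n in F. \<bar>exp (b n)\<bar> \<le> exp B"
    using assms(2) by eventually_elim auto
  moreover have "((\<lambda>n. exp (a n - b n) - 1) \<longlongrightarrow> exp 0 - 1) F"
    by (intro tendsto_intros assms(1))
  ultimately have "((\<lambda>n. exp (b n) * (exp (a n - b n) - 1)) \<longlongrightarrow> 0) F"
    by (intro tendsto_bounded_mult_zero[where B = "exp B"]) simp_all
  then show ?thesis
    by (simp add: algebra_simps flip: exp_add)
qed

text \<open>ln(1 - x) = -x + O(x^2), and n x_n^2 \<rightarrow> 0 because n x_n stays bounded.\<close>

lemma tendsto_one_minus_power_diff_exp:
  fixes x b :: "nat \<Rightarrow> real"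
  assumes x: "x \<longlonglongrightarrow> 0"
    and b: "\<forall>\<^sub>F n in sequentially. \<bar>b n\<bar> \<le> B"
    and nx: "(\<lambda>n. real n * x n + b n) \<longlonglongrightarrow> 0"
  shows "(\<lambda>n. (1 - x n) ^ n - exp (b n)) \<longlonglongrightarrow> 0"
proof -
  have small: "\<forall>\<^sub>F n in sequentially. \<bar>x n\<bar> \<le> 1/2"
    using order_tendstoD(2)[OF tendsto_rabs_zero[OF x], of "1/2"] by (auto elim: eventually_mono)
  have "\<forall>\<^sub>F n in sequentially. \<bar>real n * x n + b n\<bar> < 1"
    using order_tendstoD(2)[OF tendsto_rabs_zero[OF nx], of 1] by simp
  then have "\<forall>\<^sub>F n in sequentially. \<bar>real n * x n\<bar> \<le> B + 1"
    using b by eventually_elim auto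
  then have nx2: "(\<lambda>n. real n * x n * x n) \<longlonglongrightarrow> 0"
    by (rule tendsto_bounded_mult_zero[OF _ x])
  have "\<forall>\<^sub>F n in sequentially. norm (real n * (ln (1 - x n) + x n)) \<le> 2 * \<bar>real n * x n * x n\<bar>"
    using small
  proof eventually_elim
    case (elim n)
    have "\<bar>ln (1 + (- x n)) - (- x n)\<bar> \<le> 2 * (- x n)^2"
      by (rule abs_ln_one_plus_x_minus_x_bound) (use elim in simp)
    then have "real n * \<bar>ln (1 - x n) + x n\<bar> \<le> real n * (2 * (x n)^2)"
      by (intro mult_left_mono) auto
    then show ?case
      by (simp add: abs_mult power2_eq_square mult_ac)
  qed
  then have "(\<lambda>n. real n * (ln (1 - x n) + x n)) \<longlonglongrightarrow> 0"
    by (rule Lim_null_comparison) (use tendsto_mult_right_zero[OF tendsto_rabs_zero[OF nx2]] in simp)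
  then have "(\<lambda>n. real n * (ln (1 - x n) + x n) - (real n * x n + b n)) \<longlonglongrightarrow> 0"
    using tendsto_diff[OF _ nx] by fastforce
  then have "(\<lambda>n. exp (real n * ln (1 - x n)) - exp (b n)) \<longlonglongrightarrow> 0"
    by (intro tendsto_exp_diff_zero[OF _ b]) (simp add: algebra_simps)
  moreover have "\<forall>\<^sub>F n in sequentially.
                   exp (real n * ln (1 - x n)) - exp (b n) = (1 - x n) ^ n - exp (b n)"
    using small by eventually_elim (simp add: exp_of_nat_mult)
  ultimately show ?thesis
    by (rule Lim_transform_eventually)
qed

lemma uniform_limit_by_sequences:
  fixes f :: "nat \<Rightarrow> 'b \<Rightarrow> real"
  assumes "\<And>\<tau>s. (\<And>n. \<tau>s n \<in> K) \<Longrightarrow> (\<lambda>n. f n (\<tau>s n) - g (\<tau>s n)) \<longlonglongrightarrow> 0"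
  shows "uniform_limit K f g sequentially"
  unfolding uniform_limit_iff
proof (intro allI impI)
  fix e :: real assume "e > 0"
  show "\<forall>\<^sub>F n in sequentially. \<forall>x\<in>K. dist (f n x) (g x) < e"
  proof (cases "K = {}")
    case False
    \<comment> \<open>At each n pick a point of K where the distance is at least e, if there is one.\<close>
    then have "\<forall>n. \<exists>x\<in>K. (\<forall>y\<in>K. dist (f n y) (g y) < e) \<or> \<not> dist (f n x) (g x) < e"
      by blast
    then obtain \<tau>s where \<tau>s: "\<And>n. \<tau>s n \<in> K"
      and worst: "\<And>n. (\<forall>y\<in>K. dist (f n y) (g y) < e) \<or> \<not> dist (f n (\<tau>s n)) (g (\<tau>s n)) < e"
      by metis
    have "\<forall>\<^sub>F n in sequentially. \<bar>f n (\<tau>s n) - g (\<tau>s n)\<bar> < e"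
      using order_tendstoD(2)[OF tendsto_rabs_zero[OF assms[OF \<tau>s]] \<open>e > 0\<close>] by simp
    then show ?thesis
      by eventually_elim (use worst in \<open>auto simp: dist_real_def\<close>)
  qed simp
qed

lemma compact_obtains_abs_bound:
  fixes K :: "real set"
  assumes "compact K"
  obtains R where "\<And>\<tau>. \<tau> \<in> K \<Longrightarrow> \<bar>\<tau>\<bar> \<le> R"
  using compact_imp_bounded[OF assms] unfolding bounded_iff by auto

lemma of_nat_mult_power2_powr:
  assumes "n > 0"
  shows "real n * (\<tau> * real n powr (\<alpha> - 1))^2 = \<tau>^2 * real n powr (2*\<alpha> - 1)"
proof -
  have "real n * (real n powr (\<alpha> - 1))^2
          = real n powr 1 * (real n powr (\<alpha> - 1) * real n powr (\<alpha> - 1))"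
    using assms by (simp add: power2_eq_square)
  also have "\<dots> = real n powr (1 + ((\<alpha> - 1) + (\<alpha> - 1)))"
    by (simp only: powr_add)
  also have "1 + ((\<alpha> - 1) + (\<alpha> - 1)) = 2*\<alpha> - 1"
    by simp
  finally have key: "real n * (real n powr (\<alpha> - 1))^2 = real n powr (2*\<alpha> - 1)" .
  have "real n * (\<tau> * real n powr (\<alpha> - 1))^2 = \<tau>^2 * (real n * (real n powr (\<alpha> - 1))^2)"
    by (simp only: power_mult_distrib mult_ac)
  then show ?thesis
    by (simp only: key)
qed

lemma tendsto_bounded_mult_powr_zero:
  assumes "\<alpha> < 1" and "\<And>n. \<bar>\<tau>s n\<bar> \<le> R"
  shows "(\<lambda>n. \<tau>s n * real n powr (\<alpha> - 1)) \<longlonglongrightarrow> 0"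
proof (rule tendsto_bounded_mult_zero)
  show "\<forall>\<^sub>F n in sequentially. \<bar>\<tau>s n\<bar> \<le> R"
    using assms(2) by simp
  show "(\<lambda>n. real n powr (\<alpha> - 1)) \<longlonglongrightarrow> 0"
    using assms(1) by (intro tendsto_neg_powr[OF _ filterlim_real_sequentially]) simp
qed

lemma tendsto_exp_neg_mult_powr:
  "k > 0 \<Longrightarrow> a > 0 \<Longrightarrow> (\<lambda>n. exp (- (k * real n powr a))) \<longlonglongrightarrow> 0"
  by real_asymp

text \<open>Parts (i) and (ii) together: N^(2\<alpha>-1) tends to c = 0 for \<alpha> < 1/2 and to c = 1 for \<alpha> = 1/2.\<close>

lemma uniform_limit_power_quadratic_defect:
  fixes p q :: "real \<Rightarrow> real"
  assumes pq: "\<And>t. p t = 1 - t^2 * q t" and q: "isCont q 0"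
    and \<alpha>: "\<alpha> < 1" and c: "(\<lambda>n. real n powr (2*\<alpha> - 1)) \<longlonglongrightarrow> c" and K: "compact K"
  shows "uniform_limit K (\<lambda>N \<tau>. p (\<tau> * real N powr (\<alpha> - 1)) ^ N) (\<lambda>\<tau>. exp (- (c * \<tau>^2 * q 0)))
           sequentially"
proof (rule uniform_limit_by_sequences)
  obtain R where R: "\<And>\<tau>. \<tau> \<in> K \<Longrightarrow> \<bar>\<tau>\<bar> \<le> R"
    using compact_obtains_abs_bound[OF K] by blast
  fix \<tau>s :: "nat \<Rightarrow> real" assume "\<And>n. \<tau>s n \<in> K"
  then have bounded: "\<And>n. \<bar>\<tau>s n\<bar> \<le> R"
    using R by blast
  define t where "t n = \<tau>s n * real n powr (\<alpha> - 1)" for n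
  have t: "t \<longlonglongrightarrow> 0"
    unfolding t_def using tendsto_bounded_mult_powr_zero[OF \<alpha> bounded] .
  have qt: "(\<lambda>n. q (t n)) \<longlonglongrightarrow> q 0"
    using isCont_tendsto_compose[OF q t] .
  have x: "(\<lambda>n. t n ^ 2 * q (t n)) \<longlonglongrightarrow> 0"
    using tendsto_mult[OF tendsto_power[OF t, of 2] qt] by simp
  have square_bounded: "(\<tau>s n)^2 \<le> R^2" for n
    using power_mono[of "\<bar>\<tau>s n\<bar>" R 2] bounded[of n] by simp
  then have "\<forall>\<^sub>F n in sequentially. \<bar>- (c * (\<tau>s n)^2 * q 0)\<bar> \<le> \<bar>c\<bar> * R^2 * \<bar>q 0\<bar>"
    by (intro always_eventually allI) (auto simp: abs_mult intro!: mult_left_mono mult_right_mono)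
  moreover have "(\<lambda>n. real n * (t n ^ 2 * q (t n)) + - (c * (\<tau>s n)^2 * q 0)) \<longlonglongrightarrow> 0"
  proof -
    have "(\<lambda>n. real n powr (2*\<alpha> - 1) * q (t n) - c * q 0) \<longlonglongrightarrow> 0"
      using tendsto_diff[OF tendsto_mult[OF c qt] tendsto_const[of "c * q 0"]] by simp
    then have "(\<lambda>n. (\<tau>s n)^2 * (real n powr (2*\<alpha> - 1) * q (t n) - c * q 0)) \<longlonglongrightarrow> 0"
      by (rule tendsto_bounded_mult_zero[where B = "R^2", rotated]) (simp add: square_bounded)
    moreover have "\<forall>\<^sub>F n in sequentially.
        (\<tau>s n)^2 * (real n powr (2*\<alpha> - 1) * q (t n) - c * q 0)
          = real n * (t n ^ 2 * q (t n)) + - (c * (\<tau>s n)^2 * q 0)"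
      using eventually_gt_at_top[of 0]
    proof eventually_elim
      case (elim n)
      have "real n * (t n ^ 2 * q (t n)) = (\<tau>s n)^2 * real n powr (2*\<alpha> - 1) * q (t n)"
        unfolding t_def mult.assoc[symmetric] of_nat_mult_power2_powr[OF elim] ..
      then show ?case
        by argo
    qed
    ultimately show ?thesis
      by (rule Lim_transform_eventually)
  qed
  ultimately have "(\<lambda>n. (1 - t n ^ 2 * q (t n)) ^ n - exp (- (c * (\<tau>s n)^2 * q 0))) \<longlonglongrightarrow> 0"
    by (intro tendsto_one_minus_power_diff_exp[OF x])
  then show "(\<lambda>n. p (\<tau>s n * real n powr (\<alpha> - 1)) ^ n - exp (- (c * (\<tau>s n)^2 * q 0))) \<longlonglongrightarrow> 0"
    by (simp add: pq t_def)
qed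

text \<open>Part (iii): here p(t)^N \<le> exp(-N t^2 q(t)), and away from \<tau> = 0 the exponent grows like N^(2\<alpha>-1).\<close>

lemma uniform_limit_power_quadratic_defect_zero:
  fixes p q :: "real \<Rightarrow> real"
  assumes pq: "\<And>t. p t = 1 - t^2 * q t" and q: "isCont q 0" and p: "\<And>t. 0 \<le> p t"
    and q0: "q 0 > 0" and \<alpha>: "1/2 < \<alpha>" "\<alpha> < 1" and K: "compact K" "0 \<notin> K"
  shows "uniform_limit K (\<lambda>N \<tau>. p (\<tau> * real N powr (\<alpha> - 1)) ^ N) (\<lambda>\<tau>. 0) sequentially"
proof (rule uniform_limit_by_sequences)
  obtain R where R: "\<And>\<tau>. \<tau> \<in> K \<Longrightarrow> \<bar>\<tau>\<bar> \<le> R"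
    using compact_obtains_abs_bound[OF K(1)] by blast
  obtain m where m: "m > 0" "ball 0 m \<subseteq> - K"
    using K open_contains_ball compact_imp_closed by (metis ComplI open_Compl)
  fix \<tau>s :: "nat \<Rightarrow> real" assume \<tau>s: "\<And>n. \<tau>s n \<in> K"
  then have bounded: "\<And>n. \<bar>\<tau>s n\<bar> \<le> R"
    using R by blast
  have "m \<le> \<bar>\<tau>s n\<bar>" for n
    using m \<tau>s[of n] by (force simp: dist_real_def)
  then have away: "m^2 \<le> (\<tau>s n)^2" for n
    using m by (metis abs_le_square_iff abs_of_pos)
  define t where "t n = \<tau>s n * real n powr (\<alpha> - 1)" for n
  have "(\<lambda>n. q (t n)) \<longlonglongrightarrow> q 0"
    unfolding t_def using isCont_tendsto_compose[OF q tendsto_bounded_mult_powr_zero[OF \<alpha>(2) bounded]] .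
  then have q_big: "\<forall>\<^sub>F n in sequentially. q 0 / 2 < q (t n)"
    using q0 by (intro order_tendstoD(1)) auto
  define g where "g n = exp (- (m^2 * (q 0 / 2) * real n powr (2*\<alpha> - 1)))" for n
  have "g \<longlonglongrightarrow> 0"
  proof -
    have "m^2 * (q 0 / 2) > 0" "2*\<alpha> - 1 > 0"
      using m q0 \<alpha> by auto
    then show ?thesis
      unfolding g_def by (rule tendsto_exp_neg_mult_powr)
  qed
  then show "(\<lambda>n. p (\<tau>s n * real n powr (\<alpha> - 1)) ^ n - 0) \<longlonglongrightarrow> 0"
  proof (rule Lim_null_comparison[rotated])
    show "\<forall>\<^sub>F n in sequentially. norm (p (\<tau>s n * real n powr (\<alpha> - 1)) ^ n - 0) \<le> g n"
      using q_big eventually_gt_at_top[of 0]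
    proof eventually_elim
      case (elim n)
      have "p (t n) ^ n \<le> exp (- (t n ^ 2 * q (t n))) ^ n"
        using p[of "t n"] exp_ge_add_one_self[of "- (t n ^ 2 * q (t n))"]
        by (intro power_mono) (simp_all add: pq)
      also have "\<dots> = exp (- ((\<tau>s n)^2 * real n powr (2*\<alpha> - 1) * q (t n)))"
        using of_nat_mult_power2_powr[OF elim(2), of "\<tau>s n" \<alpha>]
        by (simp add: t_def exp_of_nat_mult[symmetric] mult.assoc[symmetric])
      also have "\<dots> \<le> g n"
      proof -
        have "m^2 * real n powr (2*\<alpha> - 1) * (q 0 / 2) \<le> (\<tau>s n)^2 * real n powr (2*\<alpha> - 1) * q (t n)"
          using elim(1) away[of n] q0 by (intro mult_mono) auto
        then show ?thesis
          unfolding g_def by (simp add: mult_ac)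
      qed
      finally show ?case
        using p[of "t n"] by (simp add: t_def)
    qed
  qed
qed

theorem theorem1:
  fixes hbar :: real and D :: "'a::chilbert_space set" and H :: "'a \<Rightarrow> 'a"
    and U :: "real \<Rightarrow> 'a \<Rightarrow> 'a" and \<psi> :: 'a
  assumes "separable_space TYPE('a)"
    and "self_adjoint D H"
    and "hbar > 0"
    and "is_evolution hbar D H U"
    and "\<psi> \<in> D" and "norm \<psi> = 1"
  shows "(\<forall>\<alpha> K. 0 \<le> \<alpha> \<and> \<alpha> < 1/2 \<and> compact K \<longrightarrow>
            uniform_limit K (\<lambda>N \<tau>. pN U \<psi> \<alpha> N \<tau>) (\<lambda>\<tau>. 1) sequentially)
       \<and> (\<forall>K. compact K \<longrightarrow>
            uniform_limit K (\<lambda>N \<tau>. pN U \<psi> (1/2) N \<tau>)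
              (\<lambda>\<tau>. exp (- (\<tau>^2) * ((Re (cinner (H \<psi>) (H \<psi>)) - (Re (cinner \<psi> (H \<psi>)))^2) / hbar^2)))
              sequentially)
       \<and> (\<forall>\<alpha> K. 1/2 < \<alpha> \<and> \<alpha> < 1 \<and> compact K \<and> K \<subseteq> - {0} \<and>
              \<not> (\<exists>c. H \<psi> = scaleC c \<psi>) \<longrightarrow>
            uniform_limit K (\<lambda>N \<tau>. pN U \<psi> \<alpha> N \<tau>) (\<lambda>\<tau>. 0) sequentially)"
proof -
  define s where "s = (Re (cinner (H \<psi>) (H \<psi>)) - (Re (cinner \<psi> (H \<psi>)))^2) / hbar^2"
  have "((\<lambda>t. (1 - surv_prob U \<psi> t) / t^2) \<longlongrightarrow> s) (at 0)"
    unfolding s_def by (rule tendsto_surv_prob_defect[OF assms(4-6)])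
  then obtain q where pq: "\<And>t. surv_prob U \<psi> t = 1 - t^2 * q t" and q: "isCont q 0" and "q 0 = s"
    using obtain_quadratic_defect[where p = "surv_prob U \<psi>", OF surv_prob_at_0[OF assms(4,6)]] by metis
  have pN: "pN U \<psi> \<alpha> = (\<lambda>N \<tau>. surv_prob U \<psi> (\<tau> * real N powr (\<alpha> - 1)) ^ N)" for \<alpha>
    by (simp add: fun_eq_iff pN_def)
  show ?thesis
    unfolding pN s_def[symmetric]
  proof (intro conjI allI impI)
    fix \<alpha> :: real and K :: "real set"
    assume "0 \<le> \<alpha> \<and> \<alpha> < 1/2 \<and> compact K"
    moreover have "(\<lambda>n. real n powr (2*\<alpha> - 1)) \<longlonglongrightarrow> 0" if "\<alpha> < 1/2"
      using that by (intro tendsto_neg_powr filterlim_real_sequentially) simp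
    ultimately show "uniform_limit K (\<lambda>N \<tau>. surv_prob U \<psi> (\<tau> * real N powr (\<alpha> - 1)) ^ N) (\<lambda>\<tau>. 1)
                       sequentially"
      using uniform_limit_power_quadratic_defect[OF pq q, of \<alpha> 0 K] by simp
  next
    fix K :: "real set"
    assume "compact K"
    moreover have "(\<lambda>n. real n powr (2 * (1/2) - 1)) \<longlonglongrightarrow> 1"
      by (rule Lim_transform_eventually[OF tendsto_const]) (simp add: eventually_gt_at_top)
    ultimately show "uniform_limit K (\<lambda>N \<tau>. surv_prob U \<psi> (\<tau> * real N powr (1/2 - 1)) ^ N)
                       (\<lambda>\<tau>. exp (- (\<tau>^2) * s)) sequentially"
      using uniform_limit_power_quadratic_defect[OF pq q, of "1/2" 1 K] \<open>q 0 = s\<close> by simp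
  next
    fix \<alpha> :: real and K :: "real set"
    assume "1/2 < \<alpha> \<and> \<alpha> < 1 \<and> compact K \<and> K \<subseteq> - {0} \<and> \<not> (\<exists>c. H \<psi> = scaleC c \<psi>)"
    moreover from this have "q 0 > 0"
      using variance_pos[OF assms(6)] assms(3) \<open>q 0 = s\<close> by (simp add: s_def)
    ultimately show "uniform_limit K (\<lambda>N \<tau>. surv_prob U \<psi> (\<tau> * real N powr (\<alpha> - 1)) ^ N) (\<lambda>\<tau>. 0)
                       sequentially"
      using uniform_limit_power_quadratic_defect_zero[OF pq q surv_prob_nonneg] by blast
  qed
qed

end
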